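(* Let $A$ be a unital, properly infinite $C^*$-algebra and let $\varphi,\psi\colon\mathcal O_\infty\to A$ be unital embeddings. Then $\psi$ is homotopic to a unital embedding $\psi'\colon\mathcal O_\infty\to A$ for which there is a unitary $u\in A$ with $[u]=0$ in $K_1(A)$ and $\psi'(s_j)=u\varphi(s_j)$ for all $j\ge1$.
   Context: $\mathcal O_\infty$ is the universal unital $C^*$-algebra generated by isometries $s_1,s_2,\dots$ with pairwise orthogonal range projections $s_js_j^*$. Two $*$-homomorphisms $\alpha,\beta\colon\mathcal O_\infty\to A$ are homotopic if there is a family $(\alpha_t)_{t\in[0,1]}$ of $*$-homomorphisms with $\alpha_0=\alpha$, $\alpha_1=\beta$ and $t\mapsto\alpha_t(x)$ norm-continuous for every $x$. A unital $C^*$-algebra is properly infinite if there are mutually orthogonal projections $e,f$ with $e\sim1\sim f$. *)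

theory Defs
  imports Complex_Main
begin

text \<open>The real structure comes from real_normed_algebra_1,
  the complex scalar multiplication is the extra operation scaleC.\<close>

class cstar_algebra = banach + real_normed_algebra_1 +
  fixes adj :: "'a \<Rightarrow> 'a"
    and scaleC :: "complex \<Rightarrow> 'a \<Rightarrow> 'a"
  assumes scaleC_of_real: "scaleC (complex_of_real r) x = scaleR r x"
    and scaleC_add_right: "scaleC c (x + y) = scaleC c x + scaleC c y"
    and scaleC_add_left: "scaleC (c + d) x = scaleC c x + scaleC d x"
    and scaleC_scaleC: "scaleC c (scaleC d x) = scaleC (c * d) x"
    and scaleC_one: "scaleC 1 x = x"
    and scaleC_mult_left: "scaleC c x * y = scaleC c (x * y)"
    and scaleC_mult_right: "x * scaleC c y = scaleC c (x * y)"
    and norm_scaleC: "norm (scaleC c x) = cmod c * norm x"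
    and adj_adj: "adj (adj x) = x"
    and adj_add: "adj (x + y) = adj x + adj y"
    and adj_scaleC: "adj (scaleC c x) = scaleC (cnj c) (adj x)"
    and adj_mult: "adj (x * y) = adj y * adj x"
    and cstar_identity: "norm (adj x * x) = (norm x)\<^sup>2"

definition isometry :: "'a::cstar_algebra \<Rightarrow> bool" where
  "isometry v \<longleftrightarrow> adj v * v = 1"

definition unitary :: "'a::cstar_algebra \<Rightarrow> bool" where
  "unitary u \<longleftrightarrow> adj u * u = 1 \<and> u * adj u = 1"

definition projection :: "'a::cstar_algebra \<Rightarrow> bool" where
  "projection p \<longleftrightarrow> p * p = p \<and> adj p = p"

definition mvn_equiv :: "'a::cstar_algebra \<Rightarrow> 'a \<Rightarrow> bool" where
  "mvn_equiv p q \<longleftrightarrow> (\<exists>v. adj v * v = p \<and> v * adj v = q)"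

definition properly_infinite :: "'a::cstar_algebra itself \<Rightarrow> bool" where
  "properly_infinite _ \<longleftrightarrow>
     (\<exists>e f :: 'a. projection e \<and> projection f \<and> e * f = 0 \<and>
        mvn_equiv e 1 \<and> mvn_equiv 1 f)"

text \<open>By the universal property, a unital *-homomorphism O_infinity \<rightarrow> A is the
  same thing as a sequence of isometries in A with pairwise orthogonal range
  projections (the images of the generators s_j; generators indexed by nat).
  Since O_infinity is simple and A is non-zero (norm 1 = 1), all of them are
  embeddings.\<close>
definition Oinf_hom :: "(nat \<Rightarrow> 'a::cstar_algebra) \<Rightarrow> bool" where
  "Oinf_hom S \<longleftrightarrow> (\<forall>j. isometry (S j)) \<and>
     (\<forall>i j. i \<noteq> j \<longrightarrow> (S i * adj (S i)) * (S j * adj (S j)) = 0)"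

text \<open>Image of a *-monomial in the generators (a word in s_j and s_j^*) under the
  homomorphism determined by S.  (j, True) stands for s_j^*, (j, False) for s_j.\<close>
definition Oinf_word :: "(nat \<Rightarrow> 'a::cstar_algebra) \<Rightarrow> (nat \<times> bool) list \<Rightarrow> 'a" where
  "Oinf_word S w = foldr (\<lambda>(j, b) x. (if b then adj (S j) else S j) * x) w 1"

text \<open>Homotopy of unital *-homomorphisms O_infinity \<rightarrow> A: a path of such
  homomorphisms, pointwise norm continuous on the dense *-subalgebra spanned by
  the *-monomials (hence everywhere, *-homomorphisms being contractive).\<close>
definition Oinf_homotopic :: "(nat \<Rightarrow> 'a::cstar_algebra) \<Rightarrow> (nat \<Rightarrow> 'a) \<Rightarrow> bool" where
  "Oinf_homotopic S T \<longleftrightarrow>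
     (\<exists>H :: real \<Rightarrow> nat \<Rightarrow> 'a.
        (\<forall>t\<in>{0..1}. Oinf_hom (H t)) \<and> H 0 = S \<and> H 1 = T \<and>
        (\<forall>w. continuous_on {0..1} (\<lambda>t. Oinf_word (H t) w)))"

text \<open>n x n matrices over A as functions nat \<Rightarrow> nat \<Rightarrow> 'a (entries with indices < n).\<close>
definition mat_mult :: "nat \<Rightarrow> (nat \<Rightarrow> nat \<Rightarrow> 'a::cstar_algebra) \<Rightarrow> (nat \<Rightarrow> nat \<Rightarrow> 'a) \<Rightarrow> nat \<Rightarrow> nat \<Rightarrow> 'a" where
  "mat_mult n X Y = (\<lambda>i k. \<Sum>l<n. X i l * Y l k)"

definition mat_adj :: "(nat \<Rightarrow> nat \<Rightarrow> 'a::cstar_algebra) \<Rightarrow> nat \<Rightarrow> nat \<Rightarrow> 'a" where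
  "mat_adj X = (\<lambda>i k. adj (X k i))"

definition mat_id :: "nat \<Rightarrow> nat \<Rightarrow> 'a::cstar_algebra" where
  "mat_id = (\<lambda>i k. if i = k then 1 else 0)"

definition mat_eq :: "nat \<Rightarrow> (nat \<Rightarrow> nat \<Rightarrow> 'a) \<Rightarrow> (nat \<Rightarrow> nat \<Rightarrow> 'a) \<Rightarrow> bool" where
  "mat_eq n X Y \<longleftrightarrow> (\<forall>i<n. \<forall>k<n. X i k = Y i k)"

definition mat_unitary :: "nat \<Rightarrow> (nat \<Rightarrow> nat \<Rightarrow> 'a::cstar_algebra) \<Rightarrow> bool" where
  "mat_unitary n U \<longleftrightarrow> mat_eq n (mat_mult n (mat_adj U) U) mat_id \<and>
                        mat_eq n (mat_mult n U (mat_adj U)) mat_id"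

definition diag_u_one :: "'a::cstar_algebra \<Rightarrow> nat \<Rightarrow> nat \<Rightarrow> 'a" where
  "diag_u_one u = (\<lambda>i k. if i = k then (if i = 0 then u else 1) else 0)"

text \<open>K_1(A) = U_\<infinity>(A)/~_1; a unitary u has [u] = 0 iff for some n \<ge> 1,
  u \<oplus> 1_(n-1) is homotopic to 1_n within the unitary group U_n(A).  The topology
  on M_n(A) (from its C*-norm) is the entrywise topology.\<close>
definition K1_zero :: "'a::cstar_algebra \<Rightarrow> bool" where
  "K1_zero u \<longleftrightarrow>
     (\<exists>n\<ge>1. \<exists>V :: real \<Rightarrow> nat \<Rightarrow> nat \<Rightarrow> 'a.
        (\<forall>t\<in>{0..1}. mat_unitary n (V t)) \<and>
        mat_eq n (V 0) (diag_u_one u) \<and> mat_eq n (V 1) mat_id \<and>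
        (\<forall>i<n. \<forall>k<n. continuous_on {0..1} (\<lambda>t. V t i k)))"

end

theory Submission
  imports Defs "HOL-Analysis.Path_Connected"
begin

text \<open>Write the generators as s_0, s_1, ...  Shifting the generators and then rotating
  shows that a unital copy S of O_\<infinity> is homotopic to j \<mapsto> S(s_0) X(s_j) for any other
  unital copy X.  Hence \<psi> is homotopic to j \<mapsto> \<psi>(s_0) \<phi>(s_j), and so is j \<mapsto> u \<phi>(s_j)
  for every unitary u with u \<phi>(s_0) = \<psi>(s_0).  Such a unitary is \<psi>(s_0) \<phi>(s_0)^* + v
  with v a partial isometry from 1 - \<phi>(s_0) \<phi>(s_0)^* onto 1 - \<psi>(s_0) \<psi>(s_0)^*; these
  projections are equivalent because each contains a copy of the other.  Multiplying u by
  the copy of u^* in the corner \<psi>(s_1) \<psi>(s_1)^*, which does not move \<psi>(s_0), kills its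
  K_1-class.\<close>

lemma adj_one [simp]: "adj (1::'a::cstar_algebra) = 1"
  using adj_mult[of "1::'a" "adj 1"] by (simp add: adj_adj)

lemma adj_zero [simp]: "adj (0::'a::cstar_algebra) = 0"
  using adj_add[of "0::'a" 0] by simp

lemma adj_uminus [simp]: "adj (- x) = - adj (x::'a::cstar_algebra)"
  using adj_add[of x "- x"] by (simp add: eq_neg_iff_add_eq_0 add.commute)

lemma adj_diff: "adj (x - y) = adj x - adj (y::'a::cstar_algebra)"
  using adj_add[of x "- y"] by simp

lemma adj_scaleR: "adj (scaleR r x) = scaleR r (adj (x::'a::cstar_algebra))"
  by (metis adj_scaleC scaleC_of_real complex_cnj_complex_of_real)

lemma adj_sum: "adj (sum f A) = (\<Sum>i\<in>A. adj (f i :: 'a::cstar_algebra))"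
  by (induction A rule: infinite_finite_induct) (auto simp: adj_add)

lemma norm_adj: "norm (adj x) = norm (x::'a::cstar_algebra)"
proof -
  have le: "norm y \<le> norm (adj y)" for y :: 'a
  proof (cases "y = 0")
    case False
    have "norm y * norm y = norm (adj y * y)" by (simp add: cstar_identity power2_eq_square)
    also have "\<dots> \<le> norm (adj y) * norm y" by (rule norm_mult_ineq)
    finally show ?thesis using False by simp
  qed simp
  show ?thesis using le[of x] le[of "adj x"] by (simp add: adj_adj)
qed

lemma bounded_linear_adj: "bounded_linear (adj :: 'a::cstar_algebra \<Rightarrow> 'a)"
  by (rule bounded_linear_intro[where K = 1]) (auto simp: adj_add adj_scaleR norm_adj)

lemma continuous_on_adj [continuous_intros]:
  "continuous_on S f \<Longrightarrow> continuous_on S (\<lambda>t. adj (f t :: 'a::cstar_algebra))"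
  using bounded_linear.continuous_on[OF bounded_linear_adj] by blast

lemma adj_mult_self_eq_0: "adj x * x = 0 \<Longrightarrow> x = (0::'a::cstar_algebra)"
  using cstar_identity[of x] by simp

lemma adj_eq_0_swap:
  assumes "adj x * y = (0::'a::cstar_algebra)"
  shows "adj y * x = 0"
  using arg_cong[OF assms, of adj] by (simp add: adj_mult adj_adj)

section \<open>Partial isometries\<close>

definition mvn_witness :: "'a::cstar_algebra \<Rightarrow> 'a \<Rightarrow> 'a \<Rightarrow> bool" where
  "mvn_witness v p q \<longleftrightarrow> adj v * v = p \<and> v * adj v = q"

lemma mvn_witness_adj: "mvn_witness v p q \<Longrightarrow> mvn_witness (adj v) q p"
  by (simp add: mvn_witness_def adj_adj)

lemma mvn_witness_selfadjoint: "mvn_witness v p q \<Longrightarrow> adj p = p \<and> adj q = q"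
  by (auto simp: mvn_witness_def adj_mult adj_adj)

lemma mvn_witness_mult_source:
  assumes "mvn_witness v p q" "p * p = p"
  shows "v * p = v"
proof -
  have "adj p = p" using mvn_witness_selfadjoint[OF assms(1)] by simp
  then have "adj (v - v * p) * (v - v * p)
      = adj v * v - adj v * v * p - p * (adj v * v) + p * (adj v * v) * p"
    by (simp add: adj_diff adj_mult algebra_simps)
  also have "\<dots> = p - p * p - p * p + p * p * p"
    using assms(1) by (simp add: mvn_witness_def)
  also have "\<dots> = 0" using assms(2) by simp
  finally show ?thesis using adj_mult_self_eq_0 by fastforce
qed

lemma mvn_witness_mult_target:
  assumes "mvn_witness v p q" "p * p = p"
  shows "q * v = v"
proof -
  have "q * v = v * (adj v * v)" using assms(1) unfolding mvn_witness_def by (metis mult.assoc)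
  then show ?thesis using mvn_witness_mult_source[OF assms] assms(1) by (simp add: mvn_witness_def)
qed

lemma mvn_witness_mult:
  assumes "mvn_witness v p q" "mvn_witness w q r" "p * p = p" "r * r = r"
  shows "mvn_witness (w * v) p r"
proof -
  have "adj (w * v) * (w * v) = (adj v * v) * (adj v * v)"
    using assms(1,2) by (simp add: mvn_witness_def adj_mult) (metis mult.assoc)
  moreover have "(w * v) * adj (w * v) = (w * adj w) * (w * adj w)"
    using assms(1,2) by (simp add: mvn_witness_def adj_mult) (metis mult.assoc)
  ultimately show ?thesis using assms by (simp add: mvn_witness_def)
qed

lemma mvn_witness_add:
  assumes v: "mvn_witness v p q" and w: "mvn_witness w p' q'"
    and "p * p = p" "p' * p' = p'" "p * p' = 0" "q * q' = 0"
  shows "mvn_witness (v + w) (p + p') (q + q')"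
proof -
  have "adj v * w = adj (q * v) * (q' * w)"
    using mvn_witness_mult_target[OF v] mvn_witness_mult_target[OF w] assms(3,4) by simp
  also have "\<dots> = adj v * (q * q') * w"
    using mvn_witness_selfadjoint[OF v] by (simp add: adj_mult mult.assoc)
  also have "\<dots> = 0"
    using assms(6) by simp
  finally have vw: "adj v * w = 0" .
  have "v * adj w = (v * p) * adj (w * p')"
    using mvn_witness_mult_source[OF v] mvn_witness_mult_source[OF w] assms(3,4) by simp
  also have "\<dots> = v * (p * p') * adj w"
    using mvn_witness_selfadjoint[OF w] by (simp add: adj_mult mult.assoc)
  also have "\<dots> = 0"
    using assms(5) by simp
  finally have "v * adj w = 0" .
  then have "w * adj v = 0" using adj_eq_0_swap[of "adj v" "adj w"] by (simp add: adj_adj)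
  then show ?thesis using v w vw adj_eq_0_swap[OF vw] \<open>v * adj w = 0\<close>
    by (simp add: mvn_witness_def adj_add distrib_left distrib_right)
qed

lemma isometry_mult_cancel: "isometry s \<Longrightarrow> adj s * (s * x) = x"
  by (simp add: isometry_def flip: mult.assoc)

lemma isometry_range_idem: "isometry s \<Longrightarrow> (s * adj s) * (s * adj s) = s * adj s"
  by (simp add: isometry_mult_cancel mult.assoc)

text \<open>The isometry t1 cuts e = 1 - t0 t0^* into t1 f t1^* \<sim> f = 1 - s s^* and a remainder,
  which t1 s^* t1^* + g maps onto all of e.\<close>

lemma range_complement_splits:
  fixes t0 t1 s :: "'a::cstar_algebra"
  assumes t0: "isometry t0" and t1: "isometry t1" and t01: "adj t0 * t1 = 0" and s: "isometry s"
  shows "\<exists>P Q a b. P * P = P \<and> Q * Q = Q \<and> P * Q = 0 \<and> P + Q = 1 - t0 * adj t0 \<and>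
           mvn_witness a P (1 - t0 * adj t0) \<and> mvn_witness b Q (1 - s * adj s)"
proof -
  define g where "g = 1 - t0 * adj t0 - t1 * adj t1"
  define f where "f = 1 - s * adj s"
  have t10: "adj t1 * t0 = 0" using adj_eq_0_swap[OF t01] .
  have cancel: "adj t1 * (t0 * x) = 0" "adj t0 * (t1 * x) = 0" for x
    using t01 t10 by (simp_all flip: mult.assoc)
  note simps = isometry_mult_cancel[OF t0] isometry_mult_cancel[OF t1] isometry_mult_cancel[OF s]
    cancel t0[unfolded isometry_def] t1[unfolded isometry_def] s[unfolded isometry_def]
    t01 t10 adj_add adj_diff adj_mult adj_adj algebra_simps
  show ?thesis
  proof (intro exI conjI)
    show "(t1 * s * adj s * adj t1 + g) * (t1 * s * adj s * adj t1 + g) = t1 * s * adj s * adj t1 + g"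
      unfolding g_def by (simp add: simps)
    show "(t1 * f * adj t1) * (t1 * f * adj t1) = t1 * f * adj t1"
      unfolding f_def by (simp add: simps)
    show "(t1 * s * adj s * adj t1 + g) * (t1 * f * adj t1) = 0"
      unfolding f_def g_def by (simp add: simps)
    show "t1 * s * adj s * adj t1 + g + t1 * f * adj t1 = 1 - t0 * adj t0"
      unfolding f_def g_def by (simp add: simps)
    show "mvn_witness (t1 * adj s * adj t1 + g) (t1 * s * adj s * adj t1 + g) (1 - t0 * adj t0)"
      unfolding mvn_witness_def g_def by (simp add: simps)
    show "mvn_witness (f * adj t1) (t1 * f * adj t1) (1 - s * adj s)"
      unfolding mvn_witness_def f_def by (simp add: simps)
  qed
qed

text \<open>Both complements are equivalent to e \<oplus> f.\<close>

lemma range_complements_equivalent: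
  fixes t0 t1 s0 s1 :: "'a::cstar_algebra"
  assumes "isometry t0" "isometry t1" "adj t0 * t1 = 0"
    and "isometry s0" "isometry s1" "adj s0 * s1 = 0"
  shows "\<exists>v. mvn_witness v (1 - t0 * adj t0) (1 - s0 * adj s0)"
proof -
  obtain P Q a b where P: "P * P = P" and Q: "Q * Q = Q" and "P * Q = 0"
    and e: "P + Q = 1 - t0 * adj t0"
    and a: "mvn_witness a P (1 - t0 * adj t0)" and b: "mvn_witness b Q (1 - s0 * adj s0)"
    using range_complement_splits[of t0 t1 s0] assms by blast
  obtain P' Q' a' b' where P': "P' * P' = P'" and Q': "Q' * Q' = Q'" and "P' * Q' = 0"
    and f: "P' + Q' = 1 - s0 * adj s0"
    and a': "mvn_witness a' P' (1 - s0 * adj s0)" and b': "mvn_witness b' Q' (1 - t0 * adj t0)"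
    using range_complement_splits[of s0 s1 t0] assms by blast
  have "Q' * P' = 0"
    using arg_cong[OF \<open>P' * Q' = 0\<close>, of adj]
      mvn_witness_selfadjoint[OF a'] mvn_witness_selfadjoint[OF b']
    by (simp add: adj_mult)
  have "mvn_witness (adj b' * a) P Q'"
    using mvn_witness_mult[OF a mvn_witness_adj[OF b'] P Q'] .
  moreover have "mvn_witness (adj a' * b) Q P'"
    using mvn_witness_mult[OF b mvn_witness_adj[OF a'] Q P'] .
  ultimately have "mvn_witness (adj b' * a + adj a' * b) (P + Q) (Q' + P')"
    using mvn_witness_add P Q \<open>P * Q = 0\<close> \<open>Q' * P' = 0\<close> by blast
  then show ?thesis using e f by (metis add.commute)
qed

lemma exists_unitary_mult_eq:
  fixes t0 t1 s0 s1 :: "'a::cstar_algebra"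
  assumes t0: "isometry t0" and "isometry t1" "adj t0 * t1 = 0"
    and s0: "isometry s0" and "isometry s1" "adj s0 * s1 = 0"
  shows "\<exists>u. unitary u \<and> u * t0 = s0"
proof -
  obtain v where v: "mvn_witness v (1 - t0 * adj t0) (1 - s0 * adj s0)"
    using range_complements_equivalent assms by blast
  have w: "mvn_witness (s0 * adj t0) (t0 * adj t0) (s0 * adj s0)"
    using t0 s0 by (simp add: mvn_witness_def adj_mult adj_adj isometry_mult_cancel mult.assoc)
  have e: "(1 - t0 * adj t0) * (1 - t0 * adj t0) = 1 - t0 * adj t0"
    using isometry_range_idem[OF t0] by (simp add: algebra_simps)
  have "mvn_witness (s0 * adj t0 + v) (t0 * adj t0 + (1 - t0 * adj t0)) (s0 * adj s0 + (1 - s0 * adj s0))"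
    using mvn_witness_add[OF w v] isometry_range_idem[OF t0] isometry_range_idem[OF s0] by (simp add: algebra_simps)
  then have "unitary (s0 * adj t0 + v)"
    by (simp add: mvn_witness_def unitary_def)
  moreover have "v * t0 = 0"
  proof -
    have "v * t0 = v * (1 - t0 * adj t0) * t0" using mvn_witness_mult_source[OF v e] by simp
    also have "\<dots> = 0" using t0 by (simp add: algebra_simps isometry_def mult.assoc)
    finally show ?thesis .
  qed
  then have "(s0 * adj t0 + v) * t0 = s0"
    using t0 by (simp add: algebra_simps isometry_def mult.assoc)
  ultimately show ?thesis by blast
qed

section \<open>Unitary matrices and K_1\<close>

lemma mat_eq_trans [trans]: "mat_eq n X Y \<Longrightarrow> mat_eq n Y Z \<Longrightarrow> mat_eq n X Z"
  by (simp add: mat_eq_def)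

lemma mat_mult_assoc:
  "mat_mult n (mat_mult n X Y) Z = mat_mult n X (mat_mult n Y Z)"
  unfolding mat_mult_def
  by (auto simp: fun_eq_iff sum_distrib_left sum_distrib_right mult.assoc intro: sum.swap)

lemma mat_adj_mult: "mat_adj (mat_mult n X Y) = mat_mult n (mat_adj Y) (mat_adj X)"
  by (simp add: mat_adj_def mat_mult_def adj_sum adj_mult fun_eq_iff)

lemma mat_adj_adj [simp]: "mat_adj (mat_adj X) = X"
  by (simp add: mat_adj_def adj_adj)

lemma mat_mult_cong_left: "mat_eq n X X' \<Longrightarrow> mat_eq n (mat_mult n X Y) (mat_mult n X' Y)"
  by (simp add: mat_eq_def mat_mult_def)

lemma mat_mult_cong_right: "mat_eq n Y Y' \<Longrightarrow> mat_eq n (mat_mult n X Y) (mat_mult n X Y')"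
  by (simp add: mat_eq_def mat_mult_def)

lemma mat_mult_id_left: "mat_eq n (mat_mult n mat_id Y) Y"
  by (simp add: mat_eq_def mat_mult_def mat_id_def if_distrib[of "\<lambda>x. x * _"] cong: if_cong)

lemma mat_unitary_adj: "mat_unitary n X \<Longrightarrow> mat_unitary n (mat_adj X)"
  by (simp add: mat_unitary_def)

lemma mat_unitary_mult:
  assumes X: "mat_unitary n X" and Y: "mat_unitary n Y"
  shows "mat_unitary n (mat_mult n X Y)"
proof -
  have isometry: "mat_eq n (mat_mult n (mat_adj (mat_mult n X Y)) (mat_mult n X Y)) mat_id"
    if X: "mat_unitary n X" and Y: "mat_unitary n Y" for X Y :: "nat \<Rightarrow> nat \<Rightarrow> 'a"
  proof -
    have "mat_eq n (mat_mult n (mat_mult n (mat_adj X) X) Y) Y"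
      using X mat_mult_cong_left mat_mult_id_left mat_eq_trans unfolding mat_unitary_def by blast
    then have "mat_eq n (mat_mult n (mat_adj Y) (mat_mult n (mat_mult n (mat_adj X) X) Y))
        (mat_mult n (mat_adj Y) Y)"
      by (rule mat_mult_cong_right)
    moreover have "mat_eq n (mat_mult n (mat_adj Y) Y) mat_id"
      using Y by (simp add: mat_unitary_def)
    moreover have "mat_mult n (mat_adj (mat_mult n X Y)) (mat_mult n X Y)
        = mat_mult n (mat_adj Y) (mat_mult n (mat_mult n (mat_adj X) X) Y)"
      by (simp add: mat_adj_mult mat_mult_assoc)
    ultimately show ?thesis by (metis mat_eq_trans)
  qed
  show ?thesis
    using isometry[OF X Y] isometry[OF mat_unitary_adj[OF Y] mat_unitary_adj[OF X]]
    by (simp add: mat_unitary_def mat_adj_mult)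
qed

definition mat2 :: "'a \<Rightarrow> 'a \<Rightarrow> 'a \<Rightarrow> 'a \<Rightarrow> nat \<Rightarrow> nat \<Rightarrow> 'a" where
  "mat2 a b c d = (\<lambda>i k. if i = 0 then (if k = 0 then a else b) else (if k = 0 then c else d))"

lemma mat_mult_mat2:
  "mat_mult 2 (mat2 a b c d) (mat2 a' b' c' d') =
     mat2 (a * a' + b * c') (a * b' + b * d') (c * a' + d * c') (c * b' + d * d')"
  by (auto simp: mat_mult_def mat2_def fun_eq_iff numeral_2_eq_2 lessThan_Suc)

lemma mat_adj_mat2: "mat_adj (mat2 a b c d) = mat2 (adj a) (adj c) (adj b) (adj d)"
  by (auto simp: mat_adj_def mat2_def fun_eq_iff)

lemma mat_eq_2_mat_id_iff:
  "mat_eq 2 X mat_id \<longleftrightarrow> X 0 0 = 1 \<and> X 0 1 = 0 \<and> X 1 0 = 0 \<and> X 1 1 = 1"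
  by (auto simp: mat_eq_def mat_id_def less_Suc_eq numeral_2_eq_2)

lemma mat_unitary_mat2I:
  fixes a b c d :: "'a::cstar_algebra"
  assumes "adj a * a + adj c * c = 1" "adj a * b + adj c * d = 0" "adj b * b + adj d * d = 1"
    and "a * adj a + b * adj b = 1" "a * adj c + b * adj d = 0" "c * adj c + d * adj d = 1"
  shows "mat_unitary 2 (mat2 a b c d)"
proof -
  have "adj b * a + adj d * c = 0" "c * adj a + d * adj b = 0"
    using arg_cong[OF assms(2), of adj] arg_cong[OF assms(5), of adj]
    by (simp_all add: adj_add adj_mult adj_adj)
  then show ?thesis
    using assms unfolding mat_unitary_def mat_adj_mat2 mat_mult_mat2
    by (simp add: mat_eq_2_mat_id_iff mat2_def)
qed

definition corner_rotation :: "'a::cstar_algebra \<Rightarrow> real \<Rightarrow> nat \<Rightarrow> nat \<Rightarrow> 'a" where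
  "corner_rotation s \<theta> =
     mat2 (scaleR (cos \<theta>) (s * adj s) + (1 - s * adj s)) (scaleR (- sin \<theta>) s)
          (scaleR (sin \<theta>) (adj s)) (scaleR (cos \<theta>) 1)"

lemma mat_unitary_corner_rotation:
  assumes s: "isometry s"
  shows "mat_unitary 2 (corner_rotation s \<theta>)"
proof -
  have cos: "cos \<theta> * cos \<theta> = 1 - sin \<theta> * sin \<theta>"
    using sin_cos_squared_add3[of \<theta>] by linarith
  show ?thesis
    unfolding corner_rotation_def using s
    by (intro mat_unitary_mat2I)
      (simp_all add: adj_add adj_diff adj_mult adj_adj adj_scaleR algebra_simps isometry_def
        isometry_mult_cancel cos scaleR_diff_left)
qed

lemma mat_unitary_diag:
  "unitary a \<Longrightarrow> unitary b \<Longrightarrow> mat_unitary 2 (mat2 a 0 0 b)"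
  by (intro mat_unitary_mat2I) (simp_all add: unitary_def)

lemma continuous_on_mat_mult_entry:
  assumes "\<And>i k. continuous_on S (\<lambda>t. X t i k)" "\<And>i k. continuous_on S (\<lambda>t. Y t i k)"
  shows "continuous_on S (\<lambda>t. mat_mult n (X t) (Y t) i k :: 'a::cstar_algebra)"
  unfolding mat_mult_def by (intro continuous_intros assms)

lemma continuous_on_mat_adj_entry:
  assumes "\<And>i k. continuous_on S (\<lambda>t. X t i k)"
  shows "continuous_on S (\<lambda>t. mat_adj (X t) i k :: 'a::cstar_algebra)"
  unfolding mat_adj_def by (intro continuous_intros assms)

lemma continuous_on_corner_rotation_entry:
  fixes f :: "'b::t2_space \<Rightarrow> real"
  assumes "continuous_on S f"
  shows "continuous_on S (\<lambda>t. corner_rotation s (f t) i k)"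
  unfolding corner_rotation_def mat2_def
  by (cases "i = 0"; cases "k = 0") (auto intro!: continuous_intros assms)

text \<open>W runs through unitaries from corner_rotation s (\<pi>/2), which conjugates diag(1, u^*)
  to diag(\<sigma>, 1) for \<sigma> = s u^* s^* + (1 - s s^*), to the flip of the two summands, which
  conjugates it to diag(u^*, 1).\<close>

lemma K1_zero_corner_adj_mult:
  fixes u s :: "'a::cstar_algebra"
  assumes u: "unitary u" and s: "isometry s"
  shows "K1_zero ((s * adj u * adj s + (1 - s * adj s)) * u)"
proof -
  define W where
    "W t = mat_mult 2 (corner_rotation s ((1 - t) * (pi / 2))) (corner_rotation 1 (t * (pi / 2)))" for t
  define V where
    "V t = mat_mult 2 (mat_mult 2 (mat_mult 2 (W t) (mat2 1 0 0 (adj u))) (mat_adj (W t))) (mat2 u 0 0 1)"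
    for t
  have one: "isometry (1::'a)" "unitary (1::'a)" by (simp_all add: isometry_def unitary_def)
  have "unitary (adj u)" using u by (auto simp: unitary_def adj_adj)
  then have "mat_unitary 2 (V t)" for t
    unfolding V_def W_def
    by (intro mat_unitary_mult mat_unitary_adj mat_unitary_corner_rotation mat_unitary_diag s one u)
  moreover have "V 0 = mat2 ((s * adj u * adj s + (1 - s * adj s)) * u) 0 0 1"
    using s unfolding V_def W_def corner_rotation_def
    by (simp add: mat_mult_mat2 mat_adj_mat2 adj_add adj_diff adj_mult adj_adj algebra_simps
        isometry_def isometry_mult_cancel)
  moreover have "V 1 = mat2 1 0 0 1"
    using u unfolding V_def W_def corner_rotation_def
    by (simp add: mat_mult_mat2 mat_adj_mat2 algebra_simps unitary_def)
  moreover have "continuous_on {0..1} (\<lambda>t. V t i k)" for i k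
    unfolding V_def W_def
    by (intro continuous_on_mat_mult_entry continuous_on_mat_adj_entry
        continuous_on_corner_rotation_entry continuous_intros)
  ultimately show ?thesis
    unfolding K1_zero_def
    by (intro exI[of _ 2] conjI exI[of _ V])
      (auto simp: mat_eq_def mat2_def diag_u_one_def mat_id_def less_Suc_eq numeral_2_eq_2)
qed

lemma exists_K1_zero_unitary_mult_eq:
  fixes t0 t1 s0 s1 :: "'a::cstar_algebra"
  assumes "isometry t0" "isometry t1" "adj t0 * t1 = 0"
    and "isometry s0" and s1: "isometry s1" and s01: "adj s0 * s1 = 0"
  shows "\<exists>u. unitary u \<and> K1_zero u \<and> u * t0 = s0"
proof -
  obtain u where u: "unitary u" and ut0: "u * t0 = s0"
    using exists_unitary_mult_eq assms by blast
  \<comment> \<open>\<sigma> fixes s0 because s1^* s0 = 0.\<close>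
  define \<sigma> where "\<sigma> = s1 * adj u * adj s1 + (1 - s1 * adj s1)"
  have "u * (adj u * x) = x" "adj u * (u * x) = x" for x
    using u by (simp_all add: unitary_def flip: mult.assoc)
  then have "unitary \<sigma>"
    using u s1 unfolding \<sigma>_def unitary_def
    by (simp add: adj_add adj_diff adj_mult adj_adj algebra_simps isometry_def isometry_mult_cancel)
  then have "unitary (\<sigma> * u)"
    using u by (simp add: unitary_def adj_mult) (metis mult.assoc mult_1_left)
  moreover have "K1_zero (\<sigma> * u)"
    unfolding \<sigma>_def using u s1 by (rule K1_zero_corner_adj_mult)
  moreover have "\<sigma> * u * t0 = s0"
    using adj_eq_0_swap[OF s01] unfolding \<sigma>_def
    by (simp add: mult.assoc ut0 algebra_simps flip: mult.assoc[of "adj s1" s0])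
  ultimately show ?thesis by blast
qed

section \<open>Homotopies of unital copies of O_\<infinity>\<close>

lemma Oinf_hom_iff:
  "Oinf_hom S \<longleftrightarrow> (\<forall>j. isometry (S j)) \<and> (\<forall>i j. i \<noteq> j \<longrightarrow> adj (S i) * S j = 0)"
proof
  assume S: "Oinf_hom S"
  have "adj (S i) * S j = 0" if "i \<noteq> j" for i j
  proof -
    have "adj (S i) * S j = adj (S i) * (S i * adj (S i) * (S j * adj (S j))) * S j"
      using S by (simp add: Oinf_hom_def isometry_def mult.assoc)
        (metis mult.assoc mult_1_left mult_1_right)
    then show ?thesis using S that by (simp add: Oinf_hom_def)
  qed
  then show "(\<forall>j. isometry (S j)) \<and> (\<forall>i j. i \<noteq> j \<longrightarrow> adj (S i) * S j = 0)"
    using S by (simp add: Oinf_hom_def)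
next
  assume "(\<forall>j. isometry (S j)) \<and> (\<forall>i j. i \<noteq> j \<longrightarrow> adj (S i) * S j = 0)"
  then show "Oinf_hom S"
    by (simp add: Oinf_hom_def mult.assoc flip: mult.assoc[of "adj (S _)"])
qed

lemma Oinf_hom_mult_left:
  assumes "isometry u" "Oinf_hom S"
  shows "Oinf_hom (\<lambda>j. u * S j)"
proof -
  have "adj (u * x) * (u * y) = adj x * y" for x y
    using assms(1) by (simp add: adj_mult mult.assoc isometry_mult_cancel)
  then show ?thesis using assms(2) by (simp add: Oinf_hom_iff isometry_def)
qed

lemma Oinf_hom_shift: "Oinf_hom S \<Longrightarrow> Oinf_hom (\<lambda>j. S (Suc j))"
  by (simp add: Oinf_hom_iff)

lemma continuous_on_Oinf_word:
  assumes "\<And>j. continuous_on T (\<lambda>t. H t j)"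
  shows "continuous_on T (\<lambda>t. Oinf_word (H t) w :: 'a::cstar_algebra)"
proof (induction w)
  case Nil
  then show ?case by (simp add: Oinf_word_def)
next
  case (Cons x w)
  obtain j b where x: "x = (j, b)" by force
  have "continuous_on T (\<lambda>t. (if b then adj (H t j) else H t j) * Oinf_word (H t) w)"
    using assms Cons by (cases b) (auto intro!: continuous_intros)
  then show ?case by (simp add: Oinf_word_def x)
qed

lemma Oinf_homotopicI:
  fixes H :: "real \<Rightarrow> nat \<Rightarrow> 'a::cstar_algebra"
  assumes "\<And>t. t \<in> {0..1} \<Longrightarrow> Oinf_hom (H t)" "\<And>j. continuous_on {0..1} (\<lambda>t. H t j)"
  shows "Oinf_homotopic (H 0) (H 1)"
  unfolding Oinf_homotopic_def using assms by (intro exI[of _ H]) (simp add: continuous_on_Oinf_word)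

lemma Oinf_homotopic_sym:
  assumes "Oinf_homotopic S T"
  shows "Oinf_homotopic T S"
proof -
  obtain H where H: "\<forall>t\<in>{0..1}. Oinf_hom (H t)" "H 0 = S" "H 1 = T"
    "\<And>w. path (\<lambda>t. Oinf_word (H t) w)"
    using assms unfolding Oinf_homotopic_def path_def by blast
  have "path (reversepath (\<lambda>t. Oinf_word (H t) w))" for w
    using H(4) by simp
  then show ?thesis
    unfolding Oinf_homotopic_def using H(1-3)
    by (intro exI[of _ "\<lambda>t. H (1 - t)"]) (auto simp: reversepath_def path_def)
qed

lemma Oinf_homotopic_trans:
  assumes "Oinf_homotopic S T" "Oinf_homotopic T U"
  shows "Oinf_homotopic S U"
proof -
  obtain H where H: "\<forall>t\<in>{0..1}. Oinf_hom (H t)" "H 0 = S" "H 1 = T"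
    "\<And>w. path (\<lambda>t. Oinf_word (H t) w)"
    using assms(1) unfolding Oinf_homotopic_def path_def by blast
  obtain K where K: "\<forall>t\<in>{0..1}. Oinf_hom (K t)" "K 0 = T" "K 1 = U"
    "\<And>w. path (\<lambda>t. Oinf_word (K t) w)"
    using assms(2) unfolding Oinf_homotopic_def path_def by blast
  define G where "G t = (if t \<le> 1/2 then H (2 * t) else K (2 * t - 1))" for t :: real
  have "path (\<lambda>t. Oinf_word (G t) w)" for w
  proof -
    have "(\<lambda>t. Oinf_word (G t) w) = (\<lambda>t. Oinf_word (H t) w) +++ (\<lambda>t. Oinf_word (K t) w)"
      by (simp add: G_def joinpaths_def fun_eq_iff)
    then show ?thesis using H(3,4) K(2,4) by (simp add: pathstart_def pathfinish_def)
  qed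
  moreover have "\<forall>t\<in>{0..1}. Oinf_hom (G t)"
    using H(1) K(1) by (simp add: G_def)
  moreover have "G 0 = S" "G 1 = U"
    using H(2) K(3) by (simp_all add: G_def)
  ultimately show ?thesis
    unfolding Oinf_homotopic_def path_def by (intro exI[of _ G]) simp
qed

lemma isometry_rotation:
  assumes "isometry a" "isometry b" "adj a * b = 0" "c * c + s * s = 1"
  shows "isometry (scaleR c a + scaleR s b :: 'a::cstar_algebra)"
proof -
  have "adj (scaleR c a + scaleR s b) * (scaleR c a + scaleR s b) = scaleR (c * c + s * s) 1"
    using assms(1-3) adj_eq_0_swap[OF assms(3)]
    by (simp add: adj_add adj_scaleR algebra_simps isometry_def scaleR_add_left)
  then show ?thesis using assms(4) by (simp add: isometry_def)
qed

lemma Oinf_homotopic_orthogonal: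
  assumes S: "Oinf_hom S" and T: "Oinf_hom T" and ST: "\<And>i j. adj (S i) * T j = 0"
  shows "Oinf_homotopic S T"
proof -
  define H where "H t j = scaleR (cos (t * pi / 2)) (S j) + scaleR (sin (t * pi / 2)) (T j)" for t j
  have "Oinf_hom (H t)" for t
    unfolding Oinf_hom_iff
  proof (intro conjI allI impI)
    fix j
    show "isometry (H t j)"
      unfolding H_def using S T ST by (intro isometry_rotation) (auto simp: Oinf_hom_iff)
  next
    fix i j :: nat
    assume "i \<noteq> j"
    then show "adj (H t i) * H t j = 0"
      unfolding H_def using S T ST adj_eq_0_swap[OF ST]
      by (simp add: Oinf_hom_iff adj_add adj_scaleR algebra_simps)
  qed
  moreover have "H 0 = S" "H 1 = T"
    by (auto simp: H_def fun_eq_iff)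
  moreover have "continuous_on {0..1} (\<lambda>t. H t j)" for j
    unfolding H_def by (intro continuous_intros) auto
  ultimately show ?thesis using Oinf_homotopicI[of H] by auto
qed

text \<open>stagger j rises from 0 to 1 on [1/(j+2), 1/(j+1)]; consecutive windows meet only at an
  endpoint, so generator j has not started to move while generator j+1 is still moving.\<close>

definition stagger :: "nat \<Rightarrow> real \<Rightarrow> real" where
  "stagger j t = max 0 (min 1 ((real j + 1) * (real j + 2) * t - (real j + 1)))"

lemma stagger_0 [simp]: "stagger j 0 = 0"
  by (simp add: stagger_def)

lemma stagger_1 [simp]: "stagger j 1 = 1"
  by (simp add: stagger_def algebra_simps)

lemma stagger_eq_0_or_Suc_eq_1: "stagger j t = 0 \<or> stagger (Suc j) t = 1"
proof (cases "stagger j t = 0")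
  case False
  then have "(real j + 1) * ((real j + 2) * t - 1) > 0"
    unfolding stagger_def by (simp add: algebra_simps)
  then have t: "(real j + 2) * t > 1"
    by (simp add: zero_less_mult_iff)
  then have "(real j + 3) * t - 1 \<ge> t"
    by (simp add: algebra_simps)
  then have "(real j + 2) * ((real j + 3) * t - 1) \<ge> (real j + 2) * t"
    by (rule mult_left_mono) simp
  with t have "(real (Suc j) + 1) * (real (Suc j) + 2) * t - (real (Suc j) + 1) \<ge> 1"
    by (simp add: algebra_simps)
  then show ?thesis by (simp add: stagger_def)
qed simp

lemma Oinf_homotopic_shift:
  assumes S: "Oinf_hom S"
  shows "Oinf_homotopic S (\<lambda>j. S (Suc j))"
proof -
  define c where "c t j = cos (pi / 2 * stagger j t)" for t j
  define s where "s t j = sin (pi / 2 * stagger j t)" for t j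
  define H where "H t j = scaleR (c t j) (S j) + scaleR (s t j) (S (Suc j))" for t j
  have iso: "isometry (S j)" and orth: "i \<noteq> j \<Longrightarrow> adj (S i) * S j = 0" for i j
    using S by (auto simp: Oinf_hom_iff)
  have "s t i * c t (Suc i) = 0" for t i
    using stagger_eq_0_or_Suc_eq_1[of i t] by (auto simp: s_def c_def)
  then have consecutive: "adj (H t i) * H t (Suc i) = 0" for t i
    using iso orth
    by (simp add: H_def adj_add adj_scaleR algebra_simps isometry_def flip: scaleR_scaleR) blast
  have increasing: "adj (H t i) * H t j = 0" if "i < j" for t i j
  proof (cases "j = Suc i")
    case True
    then show ?thesis using consecutive by simp
  next
    case False
    then show ?thesis
      using that orth by (simp add: H_def adj_add adj_scaleR algebra_simps)
  qed
  have "Oinf_hom (H t)" for t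
    unfolding Oinf_hom_iff
  proof (intro conjI allI impI)
    show "isometry (H t j)" for j
      unfolding H_def c_def s_def using iso orth
      by (intro isometry_rotation) (simp_all add: sin_cos_squared_add3)
    show "adj (H t i) * H t j = 0" if "i \<noteq> j" for i j
      using that increasing adj_eq_0_swap by (metis neq_iff)
  qed
  moreover have "H 0 = S" "H 1 = (\<lambda>j. S (Suc j))"
    by (auto simp: H_def c_def s_def fun_eq_iff)
  moreover have "continuous_on {0..1} (\<lambda>t. H t j)" for j
    unfolding H_def c_def s_def stagger_def by (intro continuous_intros)
  ultimately show ?thesis using Oinf_homotopicI[of H] by auto
qed

lemma Oinf_homotopic_prefix:
  assumes S: "Oinf_hom S" and X: "Oinf_hom X"
  shows "Oinf_homotopic S (\<lambda>j. S 0 * X j)"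
proof -
  have "Oinf_homotopic (\<lambda>j. S (Suc j)) (\<lambda>j. S 0 * X j)"
  proof (rule Oinf_homotopic_orthogonal)
    show "Oinf_hom (\<lambda>j. S (Suc j))" using S by (rule Oinf_hom_shift)
    show "Oinf_hom (\<lambda>j. S 0 * X j)"
      using S X by (intro Oinf_hom_mult_left) (simp_all add: Oinf_hom_iff)
    show "adj (S (Suc i)) * (S 0 * X j) = 0" for i j
      using S by (simp add: Oinf_hom_iff flip: mult.assoc)
  qed
  then show ?thesis
    using Oinf_homotopic_shift[OF S] Oinf_homotopic_trans by blast
qed

theorem lemma5p3:
  fixes \<phi> \<psi> :: "nat \<Rightarrow> 'a::cstar_algebra"
  assumes "properly_infinite TYPE('a)"
    and "Oinf_hom \<phi>"
    and "Oinf_hom \<psi>"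
  shows "\<exists>\<psi>' u. Oinf_hom \<psi>' \<and> Oinf_homotopic \<psi> \<psi>' \<and>
           unitary u \<and> K1_zero u \<and> (\<forall>j. \<psi>' j = u * \<phi> j)"
proof -
  obtain u where u: "unitary u" "K1_zero u" and u\<phi>: "u * \<phi> 0 = \<psi> 0"
    using exists_K1_zero_unitary_mult_eq[of "\<phi> 0" "\<phi> 1" "\<psi> 0" "\<psi> 1"] assms(2,3)
    by (auto simp: Oinf_hom_iff)
  have hom: "Oinf_hom (\<lambda>j. u * \<phi> j)"
    using u(1) assms(2) by (simp add: Oinf_hom_mult_left unitary_def isometry_def)
  have "Oinf_homotopic \<psi> (\<lambda>j. \<psi> 0 * \<phi> j)"
    using assms(3,2) by (rule Oinf_homotopic_prefix)
  moreover have "Oinf_homotopic (\<lambda>j. u * \<phi> j) (\<lambda>j. \<psi> 0 * \<phi> j)"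
    using Oinf_homotopic_prefix[OF hom assms(2)] by (simp add: u\<phi> flip: mult.assoc)
  ultimately have "Oinf_homotopic \<psi> (\<lambda>j. u * \<phi> j)"
    using Oinf_homotopic_sym Oinf_homotopic_trans by blast
  then show ?thesis using hom u by blast
qed

end
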